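(* Let $f=f^\alpha$ be a developable strip along an arc-length parametrized $C^\infty$ embedded curve $\mathbf c:I\to\mathbb R^3$ with curvature $\kappa>0$, and let $\check f$ be its dual. Let $$S:=\{(t,v)\in\Omega_\epsilon:\ \exists\,(t',v')\in\Omega_\epsilon\setminus\{(t,v)\}\text{ with }\phi_f(t,v)=\psi_f(t',v')\},$$ where $\Omega_\epsilon=I\times(-\epsilon,\epsilon)$. Then for sufficiently small $\epsilon>0$, the set $S$ has no interior points.
   Context: Space curves. For a $C^\infty$ curve $\mathbf c:I\to\mathbb R^3$, $I=[a,b]$, parametrized by arc length with curvature $\kappa=|\mathbf c''|>0$, set $\mathbf e=\mathbf c'$, $\mathbf n=\mathbf c''/\kappa$, $\mathbf b=\mathbf e\times\mathbf n$, and torsion $\tau:=\mathbf n'\cdot\mathbf b$. Developable strips. Given $C^\infty$ functions $\alpha,\beta$ on $I$ with $0<|\alpha(t)|<\pi/2$ and $0<\beta(t)<\pi$, the ruled surface is $f(t,v)=\mathbf c(t)+v\,\xi(t)$, $(t,v)\in I\times(-\epsilon,\epsilon)$, with $\xi=\cos\beta\,\mathbf e+\sin\beta(\cos\alpha\,\mathbf n+\sin\alpha\,\mathbf b)$; $\alpha$ is the first angular function. $f$ is developable iff $\cot\beta=(\alpha'+\tau)/(\kappa\sin\alpha)$; the developable strip with first angular function $\alpha$ is denoted $f^\alpha$. The dual of $f=f^\alpha$ is $\check f:=f^{-\alpha}$. Origami maps. $\phi_f(t,v)=f(t,v)$ for $v\ge0$ and $\phi_f(t,v)=\check f(t,v)$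 for $v<0$; $\psi_f(t,v)=\check f(t,v)$ for $v\ge0$ and $\psi_f(t,v)=f(t,v)$ for $v<0$. *)

theory Defs
  imports "HOL-Analysis.Analysis"
begin

(* C^infinity on a (closed) interval I: derivatives of all orders exist, taken within I
   (one-sided at the endpoints). *)
definition Cinf_on :: "real set \<Rightarrow> (real \<Rightarrow> 'a::real_normed_vector) \<Rightarrow> bool" where
  "Cinf_on I g \<longleftrightarrow> (\<exists>D. (\<forall>t\<in>I. D 0 t = g t) \<and>
      (\<forall>k. \<forall>t\<in>I. (D k has_vector_derivative D (Suc k) t) (at t within I)))"

definition vd :: "real set \<Rightarrow> (real \<Rightarrow> 'a::real_normed_vector) \<Rightarrow> real \<Rightarrow> 'a" where
  "vd I g t = vector_derivative g (at t within I)"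

definition tangent :: "real set \<Rightarrow> (real \<Rightarrow> real^3) \<Rightarrow> real \<Rightarrow> real^3" where
  "tangent I c t = vd I c t"

definition curvature :: "real set \<Rightarrow> (real \<Rightarrow> real^3) \<Rightarrow> real \<Rightarrow> real" where
  "curvature I c t = norm (vd I (vd I c) t)"

definition normal :: "real set \<Rightarrow> (real \<Rightarrow> real^3) \<Rightarrow> real \<Rightarrow> real^3" where
  "normal I c t = (1 / curvature I c t) *\<^sub>R vd I (vd I c) t"

definition binormal :: "real set \<Rightarrow> (real \<Rightarrow> real^3) \<Rightarrow> real \<Rightarrow> real^3" where
  "binormal I c t = cross3 (tangent I c t) (normal I c t)"

definition torsion :: "real set \<Rightarrow> (real \<Rightarrow> real^3) \<Rightarrow> real \<Rightarrow> real" where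
  "torsion I c t = vd I (normal I c) t \<bullet> binormal I c t"

definition strip_beta :: "real set \<Rightarrow> (real \<Rightarrow> real^3) \<Rightarrow> (real \<Rightarrow> real) \<Rightarrow> real \<Rightarrow> real" where
  "strip_beta I c \<alpha> t = (THE \<beta>. 0 < \<beta> \<and> \<beta> < pi \<and>
      cot \<beta> = (vd I \<alpha> t + torsion I c t) / (curvature I c t * sin (\<alpha> t)))"

definition ruling :: "real set \<Rightarrow> (real \<Rightarrow> real^3) \<Rightarrow> (real \<Rightarrow> real) \<Rightarrow> real \<Rightarrow> real^3" where
  "ruling I c \<alpha> t = (let \<beta> = strip_beta I c \<alpha> t in
     cos \<beta> *\<^sub>R tangent I c t +
     sin \<beta> *\<^sub>R (cos (\<alpha> t) *\<^sub>R normal I c t + sin (\<alpha> t) *\<^sub>R binormal I c t))"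

definition dev_strip :: "real set \<Rightarrow> (real \<Rightarrow> real^3) \<Rightarrow> (real \<Rightarrow> real) \<Rightarrow> real \<times> real \<Rightarrow> real^3" where
  "dev_strip I c \<alpha> p = c (fst p) + snd p *\<^sub>R ruling I c \<alpha> (fst p)"

definition dual_strip :: "real set \<Rightarrow> (real \<Rightarrow> real^3) \<Rightarrow> (real \<Rightarrow> real) \<Rightarrow> real \<times> real \<Rightarrow> real^3" where
  "dual_strip I c \<alpha> = dev_strip I c (\<lambda>t. - \<alpha> t)"

definition origami_phi :: "real set \<Rightarrow> (real \<Rightarrow> real^3) \<Rightarrow> (real \<Rightarrow> real) \<Rightarrow> real \<times> real \<Rightarrow> real^3" where
  "origami_phi I c \<alpha> p = (if snd p \<ge> 0 then dev_strip I c \<alpha> p else dual_strip I c \<alpha> p)"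

definition origami_psi :: "real set \<Rightarrow> (real \<Rightarrow> real^3) \<Rightarrow> (real \<Rightarrow> real) \<Rightarrow> real \<times> real \<Rightarrow> real^3" where
  "origami_psi I c \<alpha> p = (if snd p \<ge> 0 then dual_strip I c \<alpha> p else dev_strip I c \<alpha> p)"

definition Omega :: "real \<Rightarrow> real \<Rightarrow> real \<Rightarrow> (real \<times> real) set" where
  "Omega a b \<epsilon> = {p. fst p \<in> {a..b} \<and> snd p \<in> {-\<epsilon><..<\<epsilon>}}"

end

(* Let P and Q be the rulings of f and of its dual. Because 0 < |alpha| < pi/2, the tangent e and
   P, Q are linearly independent, uniformly along the compact curve. Near the diagonal a coincidence
   phi(t,v) = psi(t',v') reads, to first order, (t'-t) e + v' Y - v X = o(|t'-t| + |v'|) with X, Y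
   among P, Q; as psi uses the other ruling than phi on each side of the crease, the left-hand side
   has coefficients of total size |t'-t| + |v| + |v'|, forcing t = t' and v = v' = 0. Away from the
   diagonal, injectivity of c keeps the two points apart once epsilon is small. So the set S is in
   fact empty for small epsilon. *)
theory Submission
  imports Defs
begin

section \<open>Derivatives within a closed interval\<close>

lemma vd_eqI:
  assumes "a < b" "t \<in> {a..b}" "(g has_vector_derivative d) (at t within {a..b})"
  shows "vd {a..b} g t = d"
  using vector_derivative_within_cbox[of a b t g d] assms by (simp add: vd_def)

lemma Cinf_on_continuous_on:
  assumes "Cinf_on I g"
  shows "continuous_on I g"
proof -
  obtain D where D0: "\<forall>t\<in>I. D 0 t = g t"
    and D: "\<forall>k. \<forall>t\<in>I. (D k has_vector_derivative D (Suc k) t) (at t within I)"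
    using assms unfolding Cinf_on_def by blast
  have "continuous_on I (D 0)"
    using D by (meson continuous_on_eq_continuous_within has_vector_derivative_continuous)
  then show ?thesis
    by (rule continuous_on_eq) (use D0 in auto)
qed

lemma Cinf_on_has_vd:
  assumes "a < b" "Cinf_on {a..b} g" "t \<in> {a..b}"
  shows "(g has_vector_derivative vd {a..b} g t) (at t within {a..b})"
proof -
  obtain D where D0: "\<forall>t\<in>{a..b}. D 0 t = g t"
    and D: "\<forall>k. \<forall>t\<in>{a..b}. (D k has_vector_derivative D (Suc k) t) (at t within {a..b})"
    using assms(2) unfolding Cinf_on_def by blast
  have "(g has_vector_derivative D (Suc 0) t) (at t within {a..b})"
    by (rule has_vector_derivative_transform[OF assms(3), of g "D 0"]) (use D0 D assms(3) in auto)
  moreover from this have "vd {a..b} g t = D (Suc 0) t"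
    using assms by (intro vd_eqI)
  ultimately show ?thesis
    by simp
qed

lemma Cinf_on_vd:
  assumes "a < b" "Cinf_on {a..b} g"
  shows "Cinf_on {a..b} (vd {a..b} g)"
proof -
  obtain D where D0: "\<forall>t\<in>{a..b}. D 0 t = g t"
    and D: "\<forall>k. \<forall>t\<in>{a..b}. (D k has_vector_derivative D (Suc k) t) (at t within {a..b})"
    using assms(2) unfolding Cinf_on_def by blast
  have "(g has_vector_derivative D (Suc 0) t) (at t within {a..b})" if "t \<in> {a..b}" for t
    by (rule has_vector_derivative_transform[OF that, of g "D 0"]) (use D0 D that in auto)
  then have "\<forall>t\<in>{a..b}. D (Suc 0) t = vd {a..b} g t"
    using assms(1) by (blast intro: vd_eqI[symmetric])
  then show ?thesis
    unfolding Cinf_on_def using D by (intro exI[of _ "\<lambda>k. D (Suc k)"]) simp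
qed

lemma Cinf_on_uminus:
  assumes "Cinf_on I g"
  shows "Cinf_on I (\<lambda>t. - g t)"
proof -
  obtain D where "\<forall>t\<in>I. D 0 t = g t" "\<forall>k. \<forall>t\<in>I. (D k has_vector_derivative D (Suc k) t) (at t within I)"
    using assms unfolding Cinf_on_def by blast
  then show ?thesis
    unfolding Cinf_on_def by (intro exI[of _ "\<lambda>k t. - D k t"]) (auto intro: has_vector_derivative_minus)
qed

lemma has_vector_derivative_inner:
  fixes f g :: "real \<Rightarrow> 'a::real_inner"
  assumes "(f has_vector_derivative f') (at t within S)" "(g has_vector_derivative g') (at t within S)"
  shows "((\<lambda>s. f s \<bullet> g s) has_vector_derivative (f' \<bullet> g t + f t \<bullet> g')) (at t within S)"
  using has_derivative_inner[OF assms[unfolded has_vector_derivative_def]]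
  unfolding has_vector_derivative_def by (rule has_derivative_eq_rhs) (simp add: fun_eq_iff algebra_simps)

lemma has_vector_derivative_normalize:
  fixes f :: "real \<Rightarrow> 'a::real_inner"
  assumes "(f has_vector_derivative f') (at t within S)" "f t \<noteq> 0"
  shows "((\<lambda>s. (1 / norm (f s)) *\<^sub>R f s) has_vector_derivative
      ((1 / norm (f t)) *\<^sub>R f' - ((f t \<bullet> f') / norm (f t) ^ 3) *\<^sub>R f t)) (at t within S)"
proof -
  have "((norm \<circ> f) has_derivative ((\<lambda>h. h \<bullet> sgn (f t)) \<circ> (\<lambda>h. h *\<^sub>R f'))) (at t within S)"
    using assms(1) has_derivative_at_withinI[OF has_derivative_norm[OF assms(2)]]
    unfolding has_vector_derivative_def by (rule diff_chain_within)
  then have "((\<lambda>s. norm (f s)) has_real_derivative (sgn (f t) \<bullet> f')) (at t within S)"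
    unfolding has_field_derivative_def o_def
    by (rule has_derivative_eq_rhs) (simp add: fun_eq_iff inner_commute)
  from DERIV_inverse_fun[OF this] have "((\<lambda>s. inverse (norm (f s))) has_real_derivative
      - ((sgn (f t) \<bullet> f') * inverse (norm (f t) ^ 2))) (at t within S)"
    using assms(2) by (simp add: power2_eq_square)
  moreover have "(sgn (f t) \<bullet> f') * inverse (norm (f t) ^ 2) = (f t \<bullet> f') / norm (f t) ^ 3"
    by (simp add: sgn_div_norm divide_inverse power3_eq_cube power2_eq_square)
  ultimately have "((\<lambda>s. inverse (norm (f s))) has_real_derivative - ((f t \<bullet> f') / norm (f t) ^ 3)) (at t within S)"
    by simp
  from has_vector_derivative_scaleR[OF this assms(1)] show ?thesis
    by (simp add: inverse_eq_divide)
qed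

section \<open>Uniform estimates on compact sets\<close>

lemma compact_continuous_pos_lower_bound:
  fixes g :: "'a::topological_space \<Rightarrow> real"
  assumes "compact S" "continuous_on S g" "\<forall>x\<in>S. 0 < g x"
  shows "\<exists>\<delta>>0. \<forall>x\<in>S. \<delta> \<le> g x"
proof -
  have "closed (g ` S)"
    using assms by (intro compact_imp_closed compact_continuous_image)
  moreover have "0 \<notin> g ` S"
    using assms(3) by auto
  ultimately obtain \<delta> where "\<delta> > 0" "\<forall>y\<in>g ` S. \<delta> \<le> dist 0 y"
    by (metis separate_point_closed)
  then show ?thesis
    using assms(3) by (fastforce simp: dist_real_def)
qed

lemma independent_triple_uniform_lower_bound:
  fixes e p q :: "'b::topological_space \<Rightarrow> 'a::real_normed_vector"
  assumes K: "compact K"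
    and cont: "continuous_on K e" "continuous_on K p" "continuous_on K q"
    and indep: "\<forall>t\<in>K. \<forall>x y z. x *\<^sub>R e t + y *\<^sub>R p t + z *\<^sub>R q t = 0 \<longrightarrow> x = 0 \<and> y = 0 \<and> z = 0"
  shows "\<exists>m>0. \<forall>t\<in>K. \<forall>x y z. m * (\<bar>x\<bar> + \<bar>y\<bar> + \<bar>z\<bar>) \<le> norm (x *\<^sub>R e t + y *\<^sub>R p t + z *\<^sub>R q t)"
proof -
  define S where "S = {w::real \<times> real \<times> real. \<bar>fst w\<bar> + \<bar>fst (snd w)\<bar> + \<bar>snd (snd w)\<bar> = 1}"
  define F where "F = (\<lambda>(t, x, y, z). norm (x *\<^sub>R e t + y *\<^sub>R p t + z *\<^sub>R q t))"
  have "S = ({-1..1} \<times> {-1..1} \<times> {-1..1}) \<inter> S"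
    by (auto simp: S_def abs_le_iff)
  moreover have "closed S"
    unfolding S_def by (intro closed_Collect_eq continuous_intros)
  ultimately have "compact S"
    by (metis compact_Int_closed compact_Times compact_Icc)
  then have "compact (K \<times> S)"
    using K by (rule compact_Times[rotated])
  moreover have "continuous_on (K \<times> S) F"
    unfolding F_def case_prod_beta
    by (intro continuous_intros continuous_on_compose2[OF cont(1)] continuous_on_compose2[OF cont(2)]
        continuous_on_compose2[OF cont(3)]) auto
  moreover have "\<forall>w\<in>K \<times> S. 0 < F w"
    using indep by (fastforce simp: F_def S_def)
  ultimately obtain m where m: "m > 0" and F_ge: "\<forall>w\<in>K \<times> S. m \<le> F w"
    using compact_continuous_pos_lower_bound by blast
  have "m * (\<bar>x\<bar> + \<bar>y\<bar> + \<bar>z\<bar>) \<le> norm (x *\<^sub>R e t + y *\<^sub>R p t + z *\<^sub>R q t)" if "t \<in> K" for t x y z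
  proof (cases "\<bar>x\<bar> + \<bar>y\<bar> + \<bar>z\<bar> = 0")
    case False
    define s where "s = \<bar>x\<bar> + \<bar>y\<bar> + \<bar>z\<bar>"
    have s: "s > 0"
      using False by (simp add: s_def)
    have "(t, x / s, y / s, z / s) \<in> K \<times> S"
      using that s by (simp add: S_def s_def add_divide_distrib[symmetric])
    then have "m \<le> norm ((x / s) *\<^sub>R e t + (y / s) *\<^sub>R p t + (z / s) *\<^sub>R q t)"
      using F_ge by (auto simp: F_def)
    also have "\<dots> = norm ((1 / s) *\<^sub>R (x *\<^sub>R e t + y *\<^sub>R p t + z *\<^sub>R q t))"
      by (simp add: scaleR_add_right)
    also have "\<dots> = norm (x *\<^sub>R e t + y *\<^sub>R p t + z *\<^sub>R q t) / s"
      using s by simp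
    finally show ?thesis
      using s by (simp add: s_def pos_le_divide_eq mult.commute)
  qed (auto simp: add_nonneg_eq_0_iff)
  then show ?thesis
    using m by blast
qed

lemma inj_on_uniform_separation:
  fixes c :: "real \<Rightarrow> 'a::real_normed_vector"
  assumes K: "compact K" and cont: "continuous_on K c" and inj: "inj_on c K" and "\<rho> > 0"
  shows "\<exists>\<delta>>0. \<forall>t\<in>K. \<forall>t'\<in>K. \<rho> \<le> \<bar>t - t'\<bar> \<longrightarrow> \<delta> \<le> norm (c t - c t')"
proof -
  define S where "S = (K \<times> K) \<inter> {w. \<rho> \<le> \<bar>fst w - snd w\<bar>}"
  have "closed {w::real \<times> real. \<rho> \<le> \<bar>fst w - snd w\<bar>}"
    by (intro closed_Collect_le continuous_intros)
  then have "compact S"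
    unfolding S_def using K by (intro compact_Int_closed compact_Times)
  moreover have "continuous_on S (\<lambda>w. norm (c (fst w) - c (snd w)))"
    by (intro continuous_intros continuous_on_compose2[OF cont]) (auto simp: S_def)
  moreover have "\<forall>w\<in>S. 0 < norm (c (fst w) - c (snd w))"
    using inj \<open>\<rho> > 0\<close> by (force simp: S_def inj_on_def)
  ultimately obtain \<delta> where "\<delta> > 0" "\<forall>w\<in>S. \<delta> \<le> norm (c (fst w) - c (snd w))"
    using compact_continuous_pos_lower_bound by blast
  moreover have "(t, t') \<in> S" if "t \<in> K" "t' \<in> K" "\<rho> \<le> \<bar>t - t'\<bar>" for t t'
    using that by (simp add: S_def)
  ultimately show ?thesis
    by (metis fst_conv snd_conv)
qed

lemma compact_uniformly_continuous_real:
  fixes f :: "real \<Rightarrow> 'a::real_normed_vector"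
  assumes "compact K" "continuous_on K f" "\<eta> > 0"
  shows "\<exists>d>0. \<forall>s\<in>K. \<forall>t\<in>K. \<bar>s - t\<bar> < d \<longrightarrow> norm (f s - f t) \<le> \<eta>"
proof -
  have "uniformly_continuous_on K f"
    using assms by (simp add: compact_uniformly_continuous)
  then obtain d where "d > 0" "\<forall>t\<in>K. \<forall>s\<in>K. dist s t < d \<longrightarrow> dist (f s) (f t) < \<eta>"
    using \<open>\<eta> > 0\<close> unfolding uniformly_continuous_on_def by blast
  then show ?thesis
    by (intro exI[of _ d]) (auto simp: dist_norm less_imp_le)
qed

lemma linearization_bound_on_interval:
  fixes f f' :: "real \<Rightarrow> 'a::real_normed_vector"
  assumes der: "\<forall>s\<in>{a..b}. (f has_vector_derivative f' s) (at s within {a..b})"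
    and "t \<in> {a..b}" "t' \<in> {a..b}"
    and bound: "\<forall>s\<in>{a..b}. \<bar>s - t\<bar> \<le> \<bar>t' - t\<bar> \<longrightarrow> norm (f' s - f' t) \<le> B"
  shows "norm (f t' - f t - (t' - t) *\<^sub>R f' t) \<le> \<bar>t' - t\<bar> * B"
proof -
  have seg: "closed_segment t t' \<subseteq> {a..b}"
    using assms(2,3) by (auto simp: closed_segment_eq_real_ivl)
  have "norm (f t' - f t - (t' - t) *\<^sub>R f' t) \<le> norm (t' - t) * B"
  proof (rule vector_differentiable_bound_linearization[of "closed_segment t t'"])
    fix s assume s: "s \<in> closed_segment t t'"
    then show "(f has_vector_derivative f' s) (at s within closed_segment t t')"
      using der seg by (blast intro: has_vector_derivative_within_subset)
    show "norm (f' s - f' t) \<le> B"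
      using s seg bound by (auto simp: closed_segment_eq_real_ivl split: if_splits)
  qed auto
  then show ?thesis
    by simp
qed

section \<open>Two folded strips along a curve\<close>

text \<open>With \<open>P\<close>, \<open>Q\<close> the rulings of \<open>f\<close> and of its dual, \<open>\<phi>\<^sub>f (t, v) = c t + fold_offset (P t) (Q t) v\<close>
  and \<open>\<psi>\<^sub>f (t, v) = c t + fold_offset (Q t) (P t) v\<close>.\<close>
definition fold_offset :: "'a::real_vector \<Rightarrow> 'a \<Rightarrow> real \<Rightarrow> 'a" where
  "fold_offset P Q v = v *\<^sub>R (if 0 \<le> v then P else Q)"

lemma fold_offset_diff: "fold_offset P Q v - fold_offset P' Q' v = fold_offset (P - P') (Q - Q') v"
  by (simp add: fold_offset_def scaleR_diff_right)

lemma norm_fold_offset_le: "norm P \<le> K \<Longrightarrow> norm Q \<le> K \<Longrightarrow> norm (fold_offset P Q v) \<le> \<bar>v\<bar> * K"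
  by (simp add: fold_offset_def mult_left_mono)

text \<open>\<open>\<phi>\<close> and \<open>\<psi>\<close> use different rulings on each side of the crease, so whenever both sides
  involve the same ruling, \<open>v\<close> and \<open>v'\<close> have opposite signs and cannot cancel.\<close>
lemma fold_offsets_decompose:
  fixes P Q :: "'a::real_vector"
  shows "\<exists>y z. fold_offset Q P v' - fold_offset P Q v = y *\<^sub>R P + z *\<^sub>R Q \<and> \<bar>y\<bar> + \<bar>z\<bar> = \<bar>v\<bar> + \<bar>v'\<bar>"
proof (cases "0 \<le> v"; cases "0 \<le> v'")
  assume "0 \<le> v" "0 \<le> v'"
  then show ?thesis
    by (intro exI[of _ "- v"] exI[of _ v']) (auto simp: fold_offset_def)
next
  assume "0 \<le> v" "\<not> 0 \<le> v'"
  then show ?thesis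
    by (intro exI[of _ "v' - v"] exI[of _ 0]) (auto simp: fold_offset_def scaleR_diff_left)
next
  assume "\<not> 0 \<le> v" "0 \<le> v'"
  then show ?thesis
    by (intro exI[of _ 0] exI[of _ "v' - v"]) (auto simp: fold_offset_def scaleR_diff_left)
next
  assume "\<not> 0 \<le> v" "\<not> 0 \<le> v'"
  then show ?thesis
    by (intro exI[of _ v'] exI[of _ "- v"]) (auto simp: fold_offset_def)
qed

lemma folded_strips_meet_nearby:
  fixes c P Q :: "real \<Rightarrow> 'a::real_normed_vector"
  assumes m: "m > 0"
    and lower: "\<forall>x y z. m * (\<bar>x\<bar> + \<bar>y\<bar> + \<bar>z\<bar>) \<le> norm (x *\<^sub>R e + y *\<^sub>R P t + z *\<^sub>R Q t)"
    and lin: "norm (c t' - c t - (t' - t) *\<^sub>R e) \<le> \<bar>t' - t\<bar> * (m / 4)"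
    and close: "norm (P t' - P t) \<le> m / 4" "norm (Q t' - Q t) \<le> m / 4"
    and meet: "c t + fold_offset (P t) (Q t) v = c t' + fold_offset (Q t') (P t') v'"
  shows "t = t' \<and> v = 0 \<and> v' = 0"
proof -
  obtain y z where yz: "fold_offset (Q t) (P t) v' - fold_offset (P t) (Q t) v = y *\<^sub>R P t + z *\<^sub>R Q t"
      "\<bar>y\<bar> + \<bar>z\<bar> = \<bar>v\<bar> + \<bar>v'\<bar>"
    using fold_offsets_decompose by blast
  let ?R = "fold_offset (Q t') (P t') v' - fold_offset (Q t) (P t) v'"
  have "norm ?R \<le> \<bar>v'\<bar> * (m / 4)"
    unfolding fold_offset_diff using close by (rule norm_fold_offset_le[rotated])
  moreover have "(t' - t) *\<^sub>R e + y *\<^sub>R P t + z *\<^sub>R Q t = - ((c t' - c t - (t' - t) *\<^sub>R e) + ?R)"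
    using meet yz(1) by (simp add: algebra_simps)
  then have "norm ((t' - t) *\<^sub>R e + y *\<^sub>R P t + z *\<^sub>R Q t) \<le> norm (c t' - c t - (t' - t) *\<^sub>R e) + norm ?R"
    by (simp only: norm_minus_cancel norm_triangle_ineq)
  ultimately have upper: "m * (\<bar>t' - t\<bar> + \<bar>y\<bar> + \<bar>z\<bar>) \<le> \<bar>t' - t\<bar> * (m / 4) + \<bar>v'\<bar> * (m / 4)"
    using lower[rule_format, of "t' - t" y z] lin by linarith
  define s where "s = \<bar>t' - t\<bar> + \<bar>v\<bar> + \<bar>v'\<bar>"
  have "m * s = m * (\<bar>t' - t\<bar> + \<bar>y\<bar> + \<bar>z\<bar>)"
    using yz(2) by (simp add: s_def add.assoc)
  also have "\<dots> \<le> m * ((\<bar>t' - t\<bar> + \<bar>v'\<bar>) / 4)"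
    using upper by (simp add: algebra_simps)
  also have "\<dots> \<le> m * (s / 4)"
    using m by (intro mult_left_mono) (auto simp: s_def)
  finally have "s \<le> s / 4"
    using m by (simp only: mult_le_cancel_left_pos)
  then have "s \<le> 0"
    by linarith
  then show ?thesis
    unfolding s_def by linarith
qed

lemma folded_strips_meet_near_diagonal:
  fixes c P Q :: "real \<Rightarrow> 'a::real_normed_vector"
  assumes cont: "continuous_on {a..b} c" "continuous_on {a..b} P" "continuous_on {a..b} Q"
    and inj: "inj_on c {a..b}" and "\<rho> > 0"
  shows "\<exists>\<epsilon>>0. \<forall>t\<in>{a..b}. \<forall>t'\<in>{a..b}. \<forall>v v'. \<bar>v\<bar> < \<epsilon> \<longrightarrow> \<bar>v'\<bar> < \<epsilon> \<longrightarrow>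
      c t + fold_offset (P t) (Q t) v = c t' + fold_offset (Q t') (P t') v' \<longrightarrow> \<bar>t - t'\<bar> < \<rho>"
proof -
  let ?I = "{a..b}"
  obtain \<delta> where "\<delta> > 0" and far: "\<forall>t\<in>?I. \<forall>t'\<in>?I. \<rho> \<le> \<bar>t - t'\<bar> \<longrightarrow> \<delta> \<le> norm (c t - c t')"
    using inj_on_uniform_separation[OF compact_Icc cont(1) inj \<open>\<rho> > 0\<close>] by blast
  have "bounded (P ` ?I \<union> Q ` ?I)"
    using cont by (simp add: compact_imp_bounded compact_continuous_image)
  then obtain B where "B > 0" and B: "\<forall>t\<in>?I. norm (P t) \<le> B \<and> norm (Q t) \<le> B"
    by (auto simp: bounded_pos)
  define \<epsilon> where "\<epsilon> = \<delta> / (4 * B)"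
  have "\<epsilon> > 0"
    using \<open>\<delta> > 0\<close> \<open>B > 0\<close> by (simp add: \<epsilon>_def)
  moreover have "\<bar>t - t'\<bar> < \<rho>"
    if t: "t \<in> ?I" "t' \<in> ?I" and v: "\<bar>v\<bar> < \<epsilon>" "\<bar>v'\<bar> < \<epsilon>"
      and meet: "c t + fold_offset (P t) (Q t) v = c t' + fold_offset (Q t') (P t') v'"
    for t t' v v'
  proof (rule ccontr)
    have diff: "c t - c t' = fold_offset (Q t') (P t') v' - fold_offset (P t) (Q t) v"
      using arg_cong[OF meet, of "\<lambda>x. x - c t' - fold_offset (P t) (Q t) v"] by (simp add: algebra_simps)
    assume "\<not> \<bar>t - t'\<bar> < \<rho>"
    then have "\<delta> \<le> norm (fold_offset (Q t') (P t') v' - fold_offset (P t) (Q t) v)"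
      using far t by (simp add: diff[symmetric])
    also have "\<dots> \<le> \<bar>v'\<bar> * B + \<bar>v\<bar> * B"
      using B t by (intro norm_triangle_le_diff add_mono norm_fold_offset_le) auto
    also have "\<dots> \<le> \<epsilon> * B + \<epsilon> * B"
      using v \<open>B > 0\<close> by (intro add_mono mult_right_mono) auto
    finally show False
      using \<open>\<delta> > 0\<close> \<open>B > 0\<close> by (simp add: \<epsilon>_def)
  qed
  ultimately show ?thesis
    by blast
qed

lemma folded_strips_meet_only_on_curve:
  fixes c E P Q :: "real \<Rightarrow> 'a::real_normed_vector"
  assumes der: "\<forall>t\<in>{a..b}. (c has_vector_derivative E t) (at t within {a..b})"
    and cont: "continuous_on {a..b} E" "continuous_on {a..b} P" "continuous_on {a..b} Q"
    and inj: "inj_on c {a..b}"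
    and indep: "\<forall>t\<in>{a..b}. \<forall>x y z. x *\<^sub>R E t + y *\<^sub>R P t + z *\<^sub>R Q t = 0 \<longrightarrow> x = 0 \<and> y = 0 \<and> z = 0"
  shows "\<exists>\<epsilon>>0. \<forall>t\<in>{a..b}. \<forall>t'\<in>{a..b}. \<forall>v v'. \<bar>v\<bar> < \<epsilon> \<longrightarrow> \<bar>v'\<bar> < \<epsilon> \<longrightarrow>
      c t + fold_offset (P t) (Q t) v = c t' + fold_offset (Q t') (P t') v' \<longrightarrow>
      t = t' \<and> v = 0 \<and> v' = 0"
proof -
  let ?I = "{a..b}"
  have cont_c: "continuous_on ?I c"
    using der by (meson continuous_on_eq_continuous_within has_vector_derivative_continuous)
  obtain m where m: "m > 0"
    and lower: "\<forall>t\<in>?I. \<forall>x y z. m * (\<bar>x\<bar> + \<bar>y\<bar> + \<bar>z\<bar>) \<le> norm (x *\<^sub>R E t + y *\<^sub>R P t + z *\<^sub>R Q t)"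
    using independent_triple_uniform_lower_bound[OF compact_Icc cont indep] by blast
  have "m / 4 > 0"
    using m by simp
  obtain dE where "dE > 0" and dE: "\<forall>s\<in>?I. \<forall>t\<in>?I. \<bar>s - t\<bar> < dE \<longrightarrow> norm (E s - E t) \<le> m / 4"
    using compact_uniformly_continuous_real[OF compact_Icc cont(1) \<open>m / 4 > 0\<close>] by blast
  obtain dP where "dP > 0" and dP: "\<forall>s\<in>?I. \<forall>t\<in>?I. \<bar>s - t\<bar> < dP \<longrightarrow> norm (P s - P t) \<le> m / 4"
    using compact_uniformly_continuous_real[OF compact_Icc cont(2) \<open>m / 4 > 0\<close>] by blast
  obtain dQ where "dQ > 0" and dQ: "\<forall>s\<in>?I. \<forall>t\<in>?I. \<bar>s - t\<bar> < dQ \<longrightarrow> norm (Q s - Q t) \<le> m / 4"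
    using compact_uniformly_continuous_real[OF compact_Icc cont(3) \<open>m / 4 > 0\<close>] by blast
  define \<rho> where "\<rho> = min dE (min dP dQ)"
  have "\<rho> > 0"
    using \<open>dE > 0\<close> \<open>dP > 0\<close> \<open>dQ > 0\<close> by (simp add: \<rho>_def)
  obtain \<epsilon> where "\<epsilon> > 0" and near: "\<forall>t\<in>?I. \<forall>t'\<in>?I. \<forall>v v'. \<bar>v\<bar> < \<epsilon> \<longrightarrow> \<bar>v'\<bar> < \<epsilon> \<longrightarrow>
      c t + fold_offset (P t) (Q t) v = c t' + fold_offset (Q t') (P t') v' \<longrightarrow>
      \<bar>t - t'\<bar> < \<rho>"
    using folded_strips_meet_near_diagonal[OF cont_c cont(2,3) inj \<open>\<rho> > 0\<close>] by blast
  have "t = t' \<and> v = 0 \<and> v' = 0"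
    if t: "t \<in> ?I" "t' \<in> ?I" and v: "\<bar>v\<bar> < \<epsilon>" "\<bar>v'\<bar> < \<epsilon>"
      and meet: "c t + fold_offset (P t) (Q t) v = c t' + fold_offset (Q t') (P t') v'"
    for t t' v v'
  proof (rule folded_strips_meet_nearby[OF m _ _ _ _ meet])
    have "\<bar>t - t'\<bar> < \<rho>"
      using near t v meet by blast
    then show "norm (c t' - c t - (t' - t) *\<^sub>R E t) \<le> \<bar>t' - t\<bar> * (m / 4)"
      using der t dE by (intro linearization_bound_on_interval) (auto simp: \<rho>_def abs_minus_commute)
    show "norm (P t' - P t) \<le> m / 4" "norm (Q t' - Q t) \<le> m / 4"
      using \<open>\<bar>t - t'\<bar> < \<rho>\<close> t dP dQ by (auto simp: \<rho>_def abs_minus_commute)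
  qed (use lower t in blast)
  then show ?thesis
    using \<open>\<epsilon> > 0\<close> by blast
qed

section \<open>The Frenet frame and the rulings\<close>

lemma The_cot_eq_arctan: "(THE \<beta>. 0 < \<beta> \<and> \<beta> < pi \<and> cot \<beta> = x) = pi / 2 - arctan x"
proof (rule the_equality)
  have "cot (pi / 2 - arctan x) = x"
    using tan_cot'[of "pi / 2 - arctan x"] by (simp add: tan_arctan)
  then show "0 < pi / 2 - arctan x \<and> pi / 2 - arctan x < pi \<and> cot (pi / 2 - arctan x) = x"
    using arctan_lbound[of x] arctan_ubound[of x] by auto
next
  fix \<beta> assume \<beta>: "0 < \<beta> \<and> \<beta> < pi \<and> cot \<beta> = x"
  then have "arctan x = pi / 2 - \<beta>"
    using tan_cot'[of \<beta>] arctan_tan[of "pi / 2 - \<beta>"] by auto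
  then show "\<beta> = pi / 2 - arctan x"
    by simp
qed

lemma strip_beta_eq:
  "strip_beta I c \<alpha> t = pi / 2 - arctan ((vd I \<alpha> t + torsion I c t) / (curvature I c t * sin (\<alpha> t)))"
  unfolding strip_beta_def by (rule The_cot_eq_arctan)

lemma sin_strip_beta_pos: "0 < sin (strip_beta I c \<alpha> t)"
proof -
  obtain x where "strip_beta I c \<alpha> t = pi / 2 - arctan x"
    using strip_beta_eq by blast
  then show ?thesis
    using arctan_lbound[of x] arctan_ubound[of x] by (intro sin_gt_zero) auto
qed

lemma origami_phi_eq:
  "origami_phi I c \<alpha> (t, v) = c t + fold_offset (ruling I c \<alpha> t) (ruling I c (\<lambda>s. - \<alpha> s) t) v"
  by (simp add: origami_phi_def dual_strip_def dev_strip_def fold_offset_def)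

lemma origami_psi_eq:
  "origami_psi I c \<alpha> (t, v) = c t + fold_offset (ruling I c (\<lambda>s. - \<alpha> s) t) (ruling I c \<alpha> t) v"
  by (simp add: origami_psi_def dual_strip_def dev_strip_def fold_offset_def)

lemma rulings_independent:
  fixes e n b :: "'a::real_inner"
  assumes frame: "e \<bullet> n = 0" "e \<bullet> b = 0" "n \<bullet> b = 0" "n \<bullet> n = 1" "b \<bullet> b = 1" "e \<noteq> 0"
    and angles: "0 < sin \<beta>" "0 < sin \<beta>'" "cos \<theta> \<noteq> 0" "sin \<theta> \<noteq> 0"
    and zero: "x *\<^sub>R e + y *\<^sub>R (cos \<beta> *\<^sub>R e + sin \<beta> *\<^sub>R (cos \<theta> *\<^sub>R n + sin \<theta> *\<^sub>R b))
      + z *\<^sub>R (cos \<beta>' *\<^sub>R e + sin \<beta>' *\<^sub>R (cos (- \<theta>) *\<^sub>R n + sin (- \<theta>) *\<^sub>R b)) = 0"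
  shows "x = 0 \<and> y = 0 \<and> z = 0"
proof -
  have "cos \<theta> * (y * sin \<beta> + z * sin \<beta>') = 0"
    using arg_cong[OF zero, of "\<lambda>w. w \<bullet> n"] frame
    by (simp add: inner_add_left inner_commute algebra_simps)
  moreover have "sin \<theta> * (y * sin \<beta> - z * sin \<beta>') = 0"
    using arg_cong[OF zero, of "\<lambda>w. w \<bullet> b"] frame
    by (simp add: inner_add_left inner_commute algebra_simps)
  ultimately have "y * sin \<beta> = 0" "z * sin \<beta>' = 0"
    using angles(3,4) by auto
  then have "y = 0" "z = 0"
    using angles(1,2) by auto
  with zero frame(6) show ?thesis
    by simp
qed

locale frenet_curve =
  fixes a b :: real and c :: "real \<Rightarrow> real^3"
  assumes a_less_b: "a < b"
    and smooth: "Cinf_on {a..b} c"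
    and unit_speed: "\<forall>t\<in>{a..b}. norm (vd {a..b} c t) = 1"
    and curvature_pos: "\<forall>t\<in>{a..b}. curvature {a..b} c t > 0"
begin

lemma smooth_vd: "Cinf_on {a..b} (vd {a..b} c)"
  using a_less_b smooth by (rule Cinf_on_vd)

lemma smooth_vd_vd: "Cinf_on {a..b} (vd {a..b} (vd {a..b} c))"
  using a_less_b smooth_vd by (rule Cinf_on_vd)

lemma tangent_has_derivative: "\<forall>t\<in>{a..b}. (c has_vector_derivative tangent {a..b} c t) (at t within {a..b})"
  unfolding tangent_def using Cinf_on_has_vd[OF a_less_b smooth] by blast

lemma continuous_on_tangent: "continuous_on {a..b} (tangent {a..b} c)"
  using Cinf_on_continuous_on[OF smooth_vd] by (simp add: tangent_def[abs_def])

lemma continuous_on_curvature: "continuous_on {a..b} (curvature {a..b} c)"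
  unfolding curvature_def[abs_def] by (intro continuous_intros Cinf_on_continuous_on smooth_vd_vd)

lemma acceleration_nonzero: "t \<in> {a..b} \<Longrightarrow> vd {a..b} (vd {a..b} c) t \<noteq> 0"
  using curvature_pos by (auto simp: curvature_def)

lemma normal_eq: "normal {a..b} c = (\<lambda>t. (1 / norm (vd {a..b} (vd {a..b} c) t)) *\<^sub>R vd {a..b} (vd {a..b} c) t)"
  by (simp add: fun_eq_iff normal_def curvature_def)

lemma continuous_on_normal: "continuous_on {a..b} (normal {a..b} c)"
  unfolding normal_eq using acceleration_nonzero
  by (intro continuous_intros Cinf_on_continuous_on smooth_vd_vd) auto

lemma continuous_on_binormal: "continuous_on {a..b} (binormal {a..b} c)"
  unfolding binormal_def[abs_def] by (intro continuous_on_cross continuous_on_tangent continuous_on_normal)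

lemma continuous_on_torsion: "continuous_on {a..b} (torsion {a..b} c)"
proof -
  define A where "A = vd {a..b} (vd {a..b} c)"
  define A' where "A' = vd {a..b} A"
  define N' where "N' t = (1 / norm (A t)) *\<^sub>R A' t - ((A t \<bullet> A' t) / norm (A t) ^ 3) *\<^sub>R A t" for t
  have "vd {a..b} (normal {a..b} c) t = N' t" if "t \<in> {a..b}" for t
    unfolding normal_eq N'_def A'_def A_def using a_less_b that
    by (intro vd_eqI has_vector_derivative_normalize Cinf_on_has_vd smooth_vd_vd acceleration_nonzero)
  moreover have "continuous_on {a..b} (\<lambda>t. N' t \<bullet> binormal {a..b} c t)"
    unfolding N'_def A'_def A_def using acceleration_nonzero
    by (intro continuous_intros continuous_on_binormal Cinf_on_continuous_on smooth_vd_vd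
        Cinf_on_vd[OF a_less_b]) auto
  ultimately show ?thesis
    by (elim continuous_on_eq) (simp add: torsion_def)
qed

lemma tangent_inner_self: "t \<in> {a..b} \<Longrightarrow> tangent {a..b} c t \<bullet> tangent {a..b} c t = 1"
  using unit_speed by (simp add: tangent_def norm_eq_1)

lemma normal_inner_self:
  assumes "t \<in> {a..b}"
  shows "normal {a..b} c t \<bullet> normal {a..b} c t = 1"
proof -
  have "norm (normal {a..b} c t) = 1"
    using acceleration_nonzero[OF assms] by (simp add: normal_eq)
  then show ?thesis
    by (simp add: norm_eq_1)
qed

lemma tangent_inner_normal:
  assumes "t \<in> {a..b}"
  shows "tangent {a..b} c t \<bullet> normal {a..b} c t = 0"
proof -
  let ?c' = "vd {a..b} c" and ?c'' = "vd {a..b} (vd {a..b} c)"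
  have "vd {a..b} (\<lambda>s. ?c' s \<bullet> ?c' s) t = ?c'' t \<bullet> ?c' t + ?c' t \<bullet> ?c'' t"
    using a_less_b assms Cinf_on_has_vd[OF a_less_b smooth_vd assms]
    by (intro vd_eqI has_vector_derivative_inner)
  moreover have "vd {a..b} (\<lambda>s. ?c' s \<bullet> ?c' s) t = 0"
  proof (rule vd_eqI[OF a_less_b assms])
    show "((\<lambda>s. ?c' s \<bullet> ?c' s) has_vector_derivative 0) (at t within {a..b})"
      by (rule has_vector_derivative_transform[OF assms, of _ "\<lambda>s. 1"])
        (use tangent_inner_self in \<open>auto simp: tangent_def intro: derivative_intros\<close>)
  qed
  ultimately have "?c' t \<bullet> ?c'' t = 0"
    by (simp add: inner_commute[of "?c'' t"])
  then show ?thesis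
    by (simp add: tangent_def normal_eq)
qed

lemma binormal_inner_self: "t \<in> {a..b} \<Longrightarrow> binormal {a..b} c t \<bullet> binormal {a..b} c t = 1"
  using norm_cross[of "tangent {a..b} c t" "normal {a..b} c t"]
    tangent_inner_self normal_inner_self tangent_inner_normal
  by (simp add: binormal_def power2_norm_eq_inner)

lemma tangent_rulings_independent:
  assumes "t \<in> {a..b}" "cos (\<alpha> t) \<noteq> 0" "sin (\<alpha> t) \<noteq> 0"
    and "x *\<^sub>R tangent {a..b} c t + y *\<^sub>R ruling {a..b} c \<alpha> t + z *\<^sub>R ruling {a..b} c (\<lambda>s. - \<alpha> s) t = 0"
  shows "x = 0 \<and> y = 0 \<and> z = 0"
proof (rule rulings_independent)
  let ?e = "tangent {a..b} c t" and ?n = "normal {a..b} c t" and ?b = "binormal {a..b} c t"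
  show "?e \<bullet> ?n = 0" "?e \<bullet> ?b = 0" "?n \<bullet> ?b = 0" "?n \<bullet> ?n = 1" "?b \<bullet> ?b = 1"
    using assms(1) tangent_inner_normal normal_inner_self binormal_inner_self
    by (auto simp: binormal_def dot_cross_self)
  show "?e \<noteq> 0"
    using tangent_inner_self[OF assms(1)] by auto
  show "x *\<^sub>R ?e + y *\<^sub>R (cos (strip_beta {a..b} c \<alpha> t) *\<^sub>R ?e
      + sin (strip_beta {a..b} c \<alpha> t) *\<^sub>R (cos (\<alpha> t) *\<^sub>R ?n + sin (\<alpha> t) *\<^sub>R ?b))
    + z *\<^sub>R (cos (strip_beta {a..b} c (\<lambda>s. - \<alpha> s) t) *\<^sub>R ?e
      + sin (strip_beta {a..b} c (\<lambda>s. - \<alpha> s) t) *\<^sub>R (cos (- \<alpha> t) *\<^sub>R ?n + sin (- \<alpha> t) *\<^sub>R ?b)) = 0"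
    using assms(4) by (simp add: ruling_def Let_def)
qed (use assms(2,3) sin_strip_beta_pos in auto)

lemma continuous_on_ruling:
  assumes "Cinf_on {a..b} \<alpha>" "\<forall>t\<in>{a..b}. sin (\<alpha> t) \<noteq> 0"
  shows "continuous_on {a..b} (ruling {a..b} c \<alpha>)"
  unfolding ruling_def[abs_def] Let_def strip_beta_eq using assms curvature_pos
  by (intro continuous_intros continuous_on_tangent continuous_on_normal continuous_on_binormal
      continuous_on_torsion continuous_on_curvature Cinf_on_continuous_on Cinf_on_vd[OF a_less_b])
    auto

lemma origami_maps_meet_only_on_curve:
  assumes inj: "inj_on c {a..b}" and smooth_\<alpha>: "Cinf_on {a..b} \<alpha>"
    and \<alpha>_range: "\<forall>t\<in>{a..b}. 0 < \<bar>\<alpha> t\<bar> \<and> \<bar>\<alpha> t\<bar> < pi / 2"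
  shows "\<exists>\<epsilon>>0. \<forall>t\<in>{a..b}. \<forall>t'\<in>{a..b}. \<forall>v v'. \<bar>v\<bar> < \<epsilon> \<longrightarrow> \<bar>v'\<bar> < \<epsilon> \<longrightarrow>
      origami_phi {a..b} c \<alpha> (t, v) = origami_psi {a..b} c \<alpha> (t', v') \<longrightarrow> t = t' \<and> v = 0 \<and> v' = 0"
proof -
  have sin_\<alpha>: "sin (\<alpha> t) \<noteq> 0" and cos_\<alpha>: "cos (\<alpha> t) \<noteq> 0" if "t \<in> {a..b}" for t
    using \<alpha>_range that sin_eq_0_pi[of "\<alpha> t"] cos_gt_zero_pi[of "\<alpha> t"] by force+
  let ?P = "ruling {a..b} c \<alpha>" and ?Q = "ruling {a..b} c (\<lambda>s. - \<alpha> s)"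
  have "continuous_on {a..b} ?P" "continuous_on {a..b} ?Q"
    using sin_\<alpha> by (auto intro!: continuous_on_ruling Cinf_on_uminus smooth_\<alpha>)
  moreover have "\<forall>t\<in>{a..b}. \<forall>x y z. x *\<^sub>R tangent {a..b} c t + y *\<^sub>R ?P t + z *\<^sub>R ?Q t = 0 \<longrightarrow>
      x = 0 \<and> y = 0 \<and> z = 0"
    using tangent_rulings_independent sin_\<alpha> cos_\<alpha> by blast
  ultimately show ?thesis
    unfolding origami_phi_eq origami_psi_eq
    by (rule folded_strips_meet_only_on_curve[OF tangent_has_derivative continuous_on_tangent _ _ inj])
qed

end

theorem lemma1p1:
  fixes c :: "real \<Rightarrow> real^3" and \<alpha> :: "real \<Rightarrow> real" and a b :: real
  assumes "a < b"
    and "Cinf_on {a..b} c"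
    and "inj_on c {a..b}"
    and "\<forall>t\<in>{a..b}. norm (vd {a..b} c t) = 1"
    and "\<forall>t\<in>{a..b}. curvature {a..b} c t > 0"
    and "Cinf_on {a..b} \<alpha>"
    and "\<forall>t\<in>{a..b}. 0 < \<bar>\<alpha> t\<bar> \<and> \<bar>\<alpha> t\<bar> < pi / 2"
  shows "\<exists>\<epsilon>0>0. \<forall>\<epsilon>. 0 < \<epsilon> \<and> \<epsilon> \<le> \<epsilon>0 \<longrightarrow>
           interior {p \<in> Omega a b \<epsilon>. \<exists>q \<in> Omega a b \<epsilon> - {p}.
              origami_phi {a..b} c \<alpha> p = origami_psi {a..b} c \<alpha> q} = {}"
proof -
  interpret frenet_curve a b c
    using assms(1,2,4,5) by unfold_locales
  obtain \<epsilon>0 where "\<epsilon>0 > 0" and meet: "\<forall>t\<in>{a..b}. \<forall>t'\<in>{a..b}. \<forall>v v'. \<bar>v\<bar> < \<epsilon>0 \<longrightarrow> \<bar>v'\<bar> < \<epsilon>0 \<longrightarrow>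
      origami_phi {a..b} c \<alpha> (t, v) = origami_psi {a..b} c \<alpha> (t', v') \<longrightarrow> t = t' \<and> v = 0 \<and> v' = 0"
    using origami_maps_meet_only_on_curve[OF assms(3,6,7)] by blast
  have no_meet: "{p \<in> Omega a b \<epsilon>. \<exists>q \<in> Omega a b \<epsilon> - {p}.
      origami_phi {a..b} c \<alpha> p = origami_psi {a..b} c \<alpha> q} = {}" if "\<epsilon> \<le> \<epsilon>0" for \<epsilon>
  proof -
    have "q = p" if "p \<in> Omega a b \<epsilon>" "q \<in> Omega a b \<epsilon>"
      and "origami_phi {a..b} c \<alpha> p = origami_psi {a..b} c \<alpha> q" for p q
    proof -
      obtain t v t' v' where "p = (t, v)" "q = (t', v')"
        by fastforce
      with that show ?thesis
        using meet[rule_format, of t t' v v'] \<open>\<epsilon> \<le> \<epsilon>0\<close> by (auto simp: Omega_def abs_less_iff)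
    qed
    then show ?thesis
      by blast
  qed
  show ?thesis
  proof (intro exI[of _ \<epsilon>0] conjI allI impI)
    fix \<epsilon> assume "0 < \<epsilon> \<and> \<epsilon> \<le> \<epsilon>0"
    then show "interior {p \<in> Omega a b \<epsilon>. \<exists>q \<in> Omega a b \<epsilon> - {p}.
        origami_phi {a..b} c \<alpha> p = origami_psi {a..b} c \<alpha> q} = {}"
      using no_meet[of \<epsilon>] by (simp only: interior_empty)
  qed (rule \<open>\<epsilon>0 > 0\<close>)
qed

end
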